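(* Let $d$ be even, let $n>2d$ be prime, let $\omega=e^{2\pi i/n}$, let $T$ be a $d\times d$ Cauchy matrix over $\mathbb{F}_n$, and let $(W_T)_{(i_1,\dots,i_d),(j_1,\dots,j_d)}=\omega^{(i_1,\dots,i_d)\,T\,(j_1,\dots,j_d)^\top}$. For every $\lambda\subseteq[d]$, the $n^{2|\lambda|}\times n^{2(d-|\lambda|)}$ matrix $W_T^{[\lambda]}$ defined by $(W_T^{[\lambda]})_{(i_\lambda,j_\lambda),(i_{\lambda^c},j_{\lambda^c})}=(W_T)_{(i_1,\dots,i_d),(j_1,\dots,j_d)}$ (where $\lambda^c=[d]\setminus\lambda$ and $i_\lambda$ denotes the subtuple of coordinates in $\lambda$) satisfies $\mathrm{rank}(W_T^{[\lambda]})=n^{2\min\{|\lambda|,\,d-|\lambda|\}}$.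
   Context: A Cauchy matrix over $\mathbb{F}_n$ is $T_{ab}=1/(x_a-y_b)$ for pairwise distinct $x_1,\dots,x_d,y_1,\dots,y_d\in\mathbb{F}_n$; every square submatrix of it is nonsingular. Indices in $[n]$ are regarded as elements of $\mathbb{F}_n$ and the exponent is computed in $\mathbb{F}_n$. *)

theory Defs
  imports "HOL-Analysis.Analysis" "HOL-Library.Function_Algebras" "HOL-Number_Theory.Number_Theory"
begin

text \<open>Elements of the prime field F_n are represented by integers in {0..<n};
  indices in [d] are 0..d-1 (only used as positions), indices in [n] are 0..n-1.\<close>

definition cauchy_matrix :: "nat \<Rightarrow> nat \<Rightarrow> (nat \<Rightarrow> nat \<Rightarrow> int) \<Rightarrow> bool" where
  "cauchy_matrix n d T \<longleftrightarrow>
     (\<exists>x y :: nat \<Rightarrow> int.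
        (\<forall>a<d. x a \<in> {0..<int n} \<and> y a \<in> {0..<int n}) \<and>
        inj_on x {0..<d} \<and> inj_on y {0..<d} \<and> x ` {0..<d} \<inter> y ` {0..<d} = {} \<and>
        (\<forall>a<d. \<forall>b<d. T a b \<in> {0..<int n} \<and> [T a b * (x a - y b) = 1] (mod int n)))"

definition W_T :: "nat \<Rightarrow> nat \<Rightarrow> (nat \<Rightarrow> nat \<Rightarrow> int) \<Rightarrow> (nat \<Rightarrow> nat) \<Rightarrow> (nat \<Rightarrow> nat) \<Rightarrow> complex" where
  "W_T n d T i j = cis (2 * pi / real n) ^
      nat ((\<Sum>a<d. \<Sum>b<d. int (i a) * T a b * int (j b)) mod int n)"

definition glue :: "nat set \<Rightarrow> (nat \<Rightarrow> nat) \<Rightarrow> (nat \<Rightarrow> nat) \<Rightarrow> nat \<Rightarrow> nat" where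
  "glue L u v = (\<lambda>a. if a \<in> L then u a else v a)"

text \<open>The reshaped matrix W_T^[\<lambda>]: rows (i_\<lambda>, j_\<lambda>), columns (i_\<lambda>c, j_\<lambda>c).\<close>
definition W_resh :: "nat \<Rightarrow> nat \<Rightarrow> (nat \<Rightarrow> nat \<Rightarrow> int) \<Rightarrow> nat set
    \<Rightarrow> (nat \<Rightarrow> nat) \<times> (nat \<Rightarrow> nat) \<Rightarrow> (nat \<Rightarrow> nat) \<times> (nat \<Rightarrow> nat) \<Rightarrow> complex" where
  "W_resh n d T L r c = W_T n d T (glue L (fst r) (fst c)) (glue L (snd r) (snd c))"

definition tuple_pairs :: "nat \<Rightarrow> nat set \<Rightarrow> ((nat \<Rightarrow> nat) \<times> (nat \<Rightarrow> nat)) set" where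
  "tuple_pairs n S = (S \<rightarrow>\<^sub>E {..<n}) \<times> (S \<rightarrow>\<^sub>E {..<n})"

text \<open>Rank over the complex numbers of a matrix with row index set R and column index
  set C: dimension of the complex span of its columns (column vectors as functions R -> C,
  extended by 0).\<close>
definition mat_rank :: "'r set \<Rightarrow> 'c set \<Rightarrow> ('r \<Rightarrow> 'c \<Rightarrow> complex) \<Rightarrow> nat" where
  "mat_rank R C M =
     vector_space.dim (\<lambda>(s::complex) (f::'r \<Rightarrow> complex). \<lambda>r. s * f r)
       ((\<lambda>c. \<lambda>r. if r \<in> R then M r c else 0) ` C)"

end

theory Submission
  imports Defs
begin

text \<open>Split the row index (i, j) of W_T into the parts r on \<lambda> and the column index
  into the parts c on the complement. The exponent i T j^T then splits into four blocks of T: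
  the (\<lambda>,\<lambda>)-block depends on the row only and the (\<lambda>^c,\<lambda>^c)-block on the
  column only, so up to a unimodular row factor and a nonzero column factor the entry is the
  additive character of the pair (T_{\<lambda>,\<lambda>^c} c_2, (T_{\<lambda>^c,\<lambda>})^T c_1) mod n, evaluated
  at r. Distinct characters are orthogonal, hence the rank is the number of such pairs, i.e.
  n to the sum of the ranks of the two off-diagonal blocks over F_n. Square submatrices of a
  Cauchy matrix are nonsingular (one elimination step turns a Cauchy matrix into a rescaled
  smaller one), so both blocks have rank min(|\<lambda>|, d - |\<lambda>|).\<close>

section \<open>Cauchy matrices modulo a prime\<close>

text \<open>Distinctness of the u-nodes from the v-nodes is implied by the invertibility of
  u a - v b.\<close>
definition cauchy_mod :: "int \<Rightarrow> (nat \<Rightarrow> nat \<Rightarrow> int) \<Rightarrow> (nat \<Rightarrow> int) \<Rightarrow> (nat \<Rightarrow> int) \<Rightarrow>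
    nat set \<Rightarrow> nat set \<Rightarrow> bool" where
  "cauchy_mod p G u v R C \<longleftrightarrow>
     inj_on (\<lambda>a. u a mod p) R \<and> inj_on (\<lambda>b. v b mod p) C \<and>
     (\<forall>a\<in>R. \<forall>b\<in>C. [G a b * (u a - v b) = 1] (mod p))"

lemma cauchy_mod_subset:
  "cauchy_mod p G u v R C \<Longrightarrow> R' \<subseteq> R \<Longrightarrow> C' \<subseteq> C \<Longrightarrow> cauchy_mod p G u v R' C'"
  unfolding cauchy_mod_def by (auto intro: inj_on_subset)

lemma inj_on_uminus_mod:
  fixes f :: "'a \<Rightarrow> int"
  assumes "inj_on (\<lambda>a. f a mod p) A"
  shows "inj_on (\<lambda>a. - f a mod p) A"
proof (rule inj_onI)
  fix a a' assume "a \<in> A" "a' \<in> A" "- f a mod p = - f a' mod p"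
  then show "a = a'"
    using assms cong_minus_minus_iff unfolding cong_def by (metis inj_onD)
qed

lemma cauchy_mod_transpose:
  assumes "cauchy_mod p G u v R C"
  shows "cauchy_mod p (\<lambda>b a. G a b) (\<lambda>b. - v b) (\<lambda>a. - u a) C R"
proof -
  have "G a b * (- v b - - u a) = G a b * (u a - v b)" for a b
    by simp
  then show ?thesis
    using assms unfolding cauchy_mod_def by (simp add: inj_on_uminus_mod)
qed

lemma cauchy_mod_entry_not_dvd:
  assumes "prime p" "cauchy_mod p G u v R C" "a \<in> R" "b \<in> C"
  shows "\<not> p dvd G a b"
proof
  assume "p dvd G a b"
  then have "p dvd G a b * (u a - v b)"
    by simp
  moreover have "[G a b * (u a - v b) = 1] (mod p)"
    using assms(2-4) unfolding cauchy_mod_def by blast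
  ultimately have "p dvd 1"
    by (simp add: cong_dvd_iff)
  then show False
    using assms(1) not_prime_unit by blast
qed

lemma cauchy_matrix_imp_cauchy_mod:
  assumes "cauchy_matrix n d T"
  obtains x y where "cauchy_mod (int n) T x y {0..<d} {0..<d}"
proof -
  obtain x y :: "nat \<Rightarrow> int" where
    range: "\<forall>a<d. x a \<in> {0..<int n} \<and> y a \<in> {0..<int n}"
    and inj: "inj_on x {0..<d}" "inj_on y {0..<d}"
    and T: "\<forall>a<d. \<forall>b<d. T a b \<in> {0..<int n} \<and> [T a b * (x a - y b) = 1] (mod int n)"
    using assms unfolding cauchy_matrix_def by blast
  have "inj_on (\<lambda>a. x a mod int n) {0..<d}" "inj_on (\<lambda>a. y a mod int n) {0..<d}"
    using inj range inj_on_cong[of "{0..<d}" "\<lambda>a. x a mod int n" x]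
      inj_on_cong[of "{0..<d}" "\<lambda>a. y a mod int n" y] by simp_all
  moreover have "\<forall>a\<in>{0..<d}. \<forall>b\<in>{0..<d}. [T a b * (x a - y b) = 1] (mod int n)"
    using T by simp
  ultimately have "cauchy_mod (int n) T x y {0..<d} {0..<d}"
    unfolding cauchy_mod_def by blast
  then show thesis ..
qed

text \<open>One step of Gaussian elimination: the Schur complement of a Cauchy matrix
  is again a Cauchy matrix, up to nonzero row and column factors.\<close>
lemma cauchy_schur_cong:
  fixes g h k ua ua0 vb vb0 :: int
  assumes "[g * (ua - vb) = 1] (mod p)" "[h * (ua - vb0) = 1] (mod p)"
    "[k * (ua0 - vb) = 1] (mod p)"
  shows "[g - (ua0 - vb0) * h * k = (ua - ua0) * (vb0 - vb) * g * h * k] (mod p)"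
proof -
  have "[g * (h * (ua - vb0)) * (k * (ua0 - vb)) - (ua0 - vb0) * h * k * (g * (ua - vb))
      = g * 1 * 1 - (ua0 - vb0) * h * k * 1] (mod p)"
    using assms by (intro cong_diff cong_mult cong_refl)
  moreover have "g * (h * (ua - vb0)) * (k * (ua0 - vb)) - (ua0 - vb0) * h * k * (g * (ua - vb))
      = (ua - ua0) * (vb0 - vb) * g * h * k"
    by (simp add: algebra_simps)
  ultimately show ?thesis
    by (metis cong_sym mult_1_right)
qed

lemma prime_cong_mult_0_cancel:
  fixes p k x :: int
  assumes "prime p" "\<not> p dvd k" "[k * x = 0] (mod p)"
  shows "[x = 0] (mod p)"
  using assms by (simp add: cong_0_iff prime_dvd_mult_iff)

lemma cauchy_mod_not_dvd_diff:
  assumes "cauchy_mod p G u v R C"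
  shows "a \<in> R \<Longrightarrow> a' \<in> R \<Longrightarrow> a \<noteq> a' \<Longrightarrow> \<not> p dvd (u a - u a')"
    and "b \<in> C \<Longrightarrow> b' \<in> C \<Longrightarrow> b \<noteq> b' \<Longrightarrow> \<not> p dvd (v b - v b')"
  using assms unfolding cauchy_mod_def
  by (auto simp: cong_iff_dvd_diff[symmetric] cong_def dest: inj_onD)

lemma cauchy_mod_eliminate:
  assumes p: "prime p" and G: "cauchy_mod p G u v R (insert b0 C)"
    and "finite C" "b0 \<notin> C" "a \<in> R" "a0 \<in> R" "a \<noteq> a0"
    and "[(\<Sum>b\<in>insert b0 C. G a b * c b) = 0] (mod p)"
    and "[(\<Sum>b\<in>insert b0 C. G a0 b * c b) = 0] (mod p)"
  shows "[(\<Sum>b\<in>C. G a b * ((v b0 - v b) * G a0 b * c b)) = 0] (mod p)"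
proof -
  let ?C = "insert b0 C" and ?D = "u a0 - v b0"
  \<comment> \<open>Subtract ?D * G a b0 times row a0 from row a; the factor v b0 - v b kills column b0.\<close>
  have "[(\<Sum>b\<in>?C. G a b * c b) - ?D * G a b0 * (\<Sum>b\<in>?C. G a0 b * c b)
      = 0 - ?D * G a b0 * 0] (mod p)"
    using assms(8,9) by (intro cong_diff cong_mult cong_refl)
  moreover have "(\<Sum>b\<in>?C. G a b * c b) - ?D * G a b0 * (\<Sum>b\<in>?C. G a0 b * c b)
      = (\<Sum>b\<in>?C. (G a b - ?D * G a b0 * G a0 b) * c b)"
    by (simp add: left_diff_distrib sum_subtractf sum_distrib_left mult.assoc)
  ultimately have zero: "[(\<Sum>b\<in>?C. (G a b - ?D * G a b0 * G a0 b) * c b) = 0] (mod p)"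
    by simp
  have schur: "[(\<Sum>b\<in>?C. (G a b - ?D * G a b0 * G a0 b) * c b)
      = (\<Sum>b\<in>?C. (u a - u a0) * (v b0 - v b) * G a b * G a b0 * G a0 b * c b)] (mod p)"
    using G \<open>a \<in> R\<close> \<open>a0 \<in> R\<close> unfolding cauchy_mod_def
    by (intro cong_sum cong_mult cong_refl cauchy_schur_cong) auto
  have factor: "(\<Sum>b\<in>?C. (u a - u a0) * (v b0 - v b) * G a b * G a b0 * G a0 b * c b)
      = (u a - u a0) * G a b0 * (\<Sum>b\<in>C. G a b * ((v b0 - v b) * G a0 b * c b))"
    using assms(3,4) by (simp add: sum_distrib_left mult_ac)
  have "\<not> p dvd (u a - u a0) * G a b0"
    using assms(5-7) G p
    by (auto simp: prime_dvd_mult_iff dest: cauchy_mod_not_dvd_diff cauchy_mod_entry_not_dvd)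
  moreover have
    "[(u a - u a0) * G a b0 * (\<Sum>b\<in>C. G a b * ((v b0 - v b) * G a0 b * c b)) = 0] (mod p)"
    using cong_trans[OF cong_sym[OF schur[unfolded factor]] zero] .
  ultimately show ?thesis
    by (rule prime_cong_mult_0_cancel[OF p])
qed

lemma cauchy_mod_kernel:
  assumes "prime p" "cauchy_mod p G u v R C" "finite C" "finite R" "card C \<le> card R"
    and "\<forall>a\<in>R. [(\<Sum>b\<in>C. G a b * c b) = 0] (mod p)"
  shows "\<forall>b\<in>C. [c b = 0] (mod p)"
  using assms(3,2,4-6)
proof (induction C arbitrary: R c rule: finite_induct)
  case empty
  then show ?case by simp
next
  case (insert b0 C R c)
  then obtain a0 where a0: "a0 \<in> R"
    by fastforce
  define c' where "c' b = (v b0 - v b) * G a0 b * c b" for b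
  have C_ker: "\<forall>b\<in>C. [c' b = 0] (mod p)"
  proof (rule insert.IH)
    show "cauchy_mod p G u v (R - {a0}) C"
      using insert.prems(1) by (rule cauchy_mod_subset) auto
    show "finite (R - {a0})" "card C \<le> card (R - {a0})"
      using insert a0 by auto
    show "\<forall>a\<in>R - {a0}. [(\<Sum>b\<in>C. G a b * c' b) = 0] (mod p)"
    proof
      fix a assume "a \<in> R - {a0}"
      then show "[(\<Sum>b\<in>C. G a b * c' b) = 0] (mod p)"
        unfolding c'_def
        by (intro cauchy_mod_eliminate[OF assms(1) insert.prems(1) insert.hyps])
          (use insert.prems(4) a0 in auto)
    qed
  qed
  have C_zero: "[c b = 0] (mod p)" if "b \<in> C" for b
  proof (rule prime_cong_mult_0_cancel[OF assms(1)])
    show "\<not> p dvd (v b0 - v b) * G a0 b"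
      using that a0 insert assms(1)
      by (auto simp: prime_dvd_mult_iff dest: cauchy_mod_not_dvd_diff cauchy_mod_entry_not_dvd)
    show "[(v b0 - v b) * G a0 b * c b = 0] (mod p)"
      using C_ker that by (simp add: c'_def)
  qed
  have "[(\<Sum>b\<in>C. G a0 b * c b) = (\<Sum>b\<in>C. G a0 b * 0)] (mod p)"
    using C_zero by (intro cong_sum cong_mult cong_refl)
  then have "[G a0 b0 * c b0 + (\<Sum>b\<in>C. G a0 b * c b) = G a0 b0 * c b0] (mod p)"
    by (simp add: cong_add_lcancel_0)
  moreover have "[G a0 b0 * c b0 + (\<Sum>b\<in>C. G a0 b * c b) = 0] (mod p)"
    using insert.prems(4) insert.hyps a0 by simp
  ultimately have "[G a0 b0 * c b0 = 0] (mod p)"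
    using cong_sym cong_trans by blast
  then have "[c b0 = 0] (mod p)"
    using assms(1) cauchy_mod_entry_not_dvd[OF assms(1) insert.prems(1) a0]
    by (auto intro: prime_cong_mult_0_cancel)
  with C_zero show ?case
    by simp
qed

definition mat_vec_mod :: "nat \<Rightarrow> (nat \<Rightarrow> nat \<Rightarrow> int) \<Rightarrow> nat set \<Rightarrow> nat set \<Rightarrow>
    (nat \<Rightarrow> nat) \<Rightarrow> nat \<Rightarrow> int" where
  "mat_vec_mod n G R C c = restrict (\<lambda>a. (\<Sum>b\<in>C. G a b * int (c b)) mod int n) R"

lemma mat_vec_mod_in_PiE: "n > 0 \<Longrightarrow> mat_vec_mod n G R C c \<in> R \<rightarrow>\<^sub>E {0..<int n}"
  by (simp add: mat_vec_mod_def)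

lemma inj_on_mat_vec_mod:
  assumes "prime n" "cauchy_mod (int n) G u v R C" "finite R" "finite C" "card C \<le> card R"
  shows "inj_on (mat_vec_mod n G R C) (C \<rightarrow>\<^sub>E {..<n})"
proof (rule inj_onI)
  fix c c' assume c: "c \<in> C \<rightarrow>\<^sub>E {..<n}" and c': "c' \<in> C \<rightarrow>\<^sub>E {..<n}"
    and eq: "mat_vec_mod n G R C c = mat_vec_mod n G R C c'"
  have ker: "\<forall>a\<in>R. [(\<Sum>b\<in>C. G a b * (int (c b) - int (c' b))) = 0] (mod int n)"
  proof
    fix a assume "a \<in> R"
    then have "[(\<Sum>b\<in>C. G a b * int (c b)) = (\<Sum>b\<in>C. G a b * int (c' b))] (mod int n)"
      using fun_cong[OF eq, of a] by (simp add: mat_vec_mod_def cong_def)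
    then show "[(\<Sum>b\<in>C. G a b * (int (c b) - int (c' b))) = 0] (mod int n)"
      by (simp add: right_diff_distrib sum_subtractf cong_diff_iff_cong_0)
  qed
  have "prime (int n)"
    using assms(1) by simp
  from this assms(2,4,3,5) ker have "\<forall>b\<in>C. [int (c b) - int (c' b) = 0] (mod int n)"
    by (rule cauchy_mod_kernel)
  then have "\<forall>b\<in>C. int (c b) mod int n = int (c' b) mod int n"
    unfolding cong_diff_iff_cong_0 by (simp only: cong_def)
  then have "\<forall>b\<in>C. c b = c' b"
    using c c' by (auto dest!: PiE_mem)
  then show "c = c'"
    using c c' by (auto intro: PiE_ext)
qed

lemma card_image_mat_vec_mod:
  assumes "prime n" "cauchy_mod (int n) G u v R C" "finite R" "finite C"
  shows "card (mat_vec_mod n G R C ` (C \<rightarrow>\<^sub>E {..<n})) = n ^ min (card R) (card C)"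
proof (cases "card C \<le> card R")
  case True
  then show ?thesis
    using assms inj_on_mat_vec_mod by (simp add: card_image card_PiE min_absorb2)
next
  case False
  then obtain S where S: "S \<subseteq> C" "card S = card R"
    by (metis nat_le_linear obtain_subset_with_card_n)
  have n: "n > 0"
    using assms(1) prime_gt_0_nat by blast
  let ?F = "mat_vec_mod n G R C" and ?FS = "mat_vec_mod n G R S"
  have sub_S: "?FS ` (S \<rightarrow>\<^sub>E {..<n}) \<subseteq> ?F ` (C \<rightarrow>\<^sub>E {..<n})"
  proof
    fix z assume "z \<in> ?FS ` (S \<rightarrow>\<^sub>E {..<n})"
    then obtain c where c: "c \<in> S \<rightarrow>\<^sub>E {..<n}" and z: "z = ?FS c"
      by blast
    define c0 where "c0 = restrict (\<lambda>b. if b \<in> S then c b else 0) C"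
    have "(\<Sum>b\<in>C. G a b * int (c0 b)) = (\<Sum>b\<in>S. G a b * int (c b))" for a
      using S assms(4) by (intro sum.mono_neutral_cong_right) (auto simp: c0_def)
    then have "z = ?F c0"
      by (simp add: z mat_vec_mod_def)
    moreover have "c0 \<in> C \<rightarrow>\<^sub>E {..<n}"
      using c n by (auto simp: c0_def)
    ultimately show "z \<in> ?F ` (C \<rightarrow>\<^sub>E {..<n})"
      by blast
  qed
  have sub_R: "?F ` (C \<rightarrow>\<^sub>E {..<n}) \<subseteq> R \<rightarrow>\<^sub>E {0..<int n}"
    using mat_vec_mod_in_PiE[OF n] by (simp add: image_subset_iff)
  then have fin: "finite (?F ` (C \<rightarrow>\<^sub>E {..<n}))"
    using assms(3) finite_subset by (blast intro: finite_PiE)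
  have "inj_on ?FS (S \<rightarrow>\<^sub>E {..<n})"
    using assms(1,3) cauchy_mod_subset[OF assms(2) order_refl S(1)]
      finite_subset[OF S(1) assms(4)] S(2)
    by (intro inj_on_mat_vec_mod) simp_all
  then have "card (?FS ` (S \<rightarrow>\<^sub>E {..<n})) = n ^ card R"
    using S finite_subset[OF S(1) assms(4)] by (simp add: card_image card_PiE)
  then have "n ^ card R \<le> card (?F ` (C \<rightarrow>\<^sub>E {..<n}))"
    using card_mono[OF fin sub_S] by simp
  moreover have "card (?F ` (C \<rightarrow>\<^sub>E {..<n})) \<le> n ^ card R"
    using card_mono[OF _ sub_R] assms(3) by (simp add: card_PiE finite_PiE)
  ultimately show ?thesis
    using False by simp
qed

section \<open>Additive characters\<close>

definition omega :: "nat \<Rightarrow> int \<Rightarrow> complex" where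
  "omega n z = cis (2 * pi * of_int z / real n)"

lemma omega_0 [simp]: "omega n 0 = 1"
  by (simp add: omega_def)

lemma omega_nonzero [simp]: "omega n z \<noteq> 0"
  by (simp add: omega_def)

lemma omega_add: "omega n (a + b) = omega n a * omega n b"
  by (simp add: omega_def cis_mult add_divide_distrib distrib_left)

lemma omega_sum: "omega n (\<Sum>i\<in>A. f i) = (\<Prod>i\<in>A. omega n (f i))"
  by (induction A rule: infinite_finite_induct) (simp_all add: omega_add)

lemma omega_mult_cnj: "omega n a * cnj (omega n b) = omega n (a - b)"
  by (simp add: omega_def cis_cnj cis_mult diff_divide_distrib right_diff_distrib)

lemma omega_pow: "omega n e ^ t = omega n (int t * e)"
proof -
  have "real t * (2 * pi * of_int e / real n) = 2 * pi * of_int (int t * e) / real n"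
    by simp
  then show ?thesis
    unfolding omega_def Complex.DeMoivre by metis
qed

lemma omega_eq_1_iff:
  assumes "n > 0"
  shows "omega n z = 1 \<longleftrightarrow> int n dvd z"
proof
  assume "omega n z = 1"
  then have "cos (2 * pi * of_int z / real n) = 1"
    unfolding omega_def by (metis cis.sel(1) one_complex.sel(1))
  then obtain k :: int where "2 * pi * of_int z / real n = of_int k * 2 * pi"
    by (auto simp: cos_one_2pi_int)
  then have "real_of_int z = real n * of_int k"
    using assms by (simp add: field_simps)
  then have "z = int n * k"
    by (metis of_int_eq_iff of_int_mult of_int_of_nat_eq)
  then show "int n dvd z"
    by simp
next
  assume "int n dvd z"
  then obtain k where "z = int n * k"
    by blast
  then have "2 * pi * of_int z / real n = 2 * pi * of_int k"
    using assms by simp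
  then show "omega n z = 1"
    by (simp add: omega_def)
qed

lemma omega_cong:
  assumes "n > 0" "[a = b] (mod int n)"
  shows "omega n a = omega n b"
proof -
  have "omega n (b - a) = 1"
    using assms by (simp add: omega_eq_1_iff cong_iff_dvd_diff dvd_diff_commute)
  then show ?thesis
    using omega_add[of n a "b - a"] by simp
qed

lemma sum_omega_multiples:
  assumes "n > 0"
  shows "(\<Sum>t<n. omega n (int t * e)) = (if int n dvd e then of_nat n else 0)"
proof (cases "int n dvd e")
  case True
  then have "omega n (int t * e) = 1" for t
    using assms by (simp add: omega_eq_1_iff)
  then show ?thesis
    using True by simp
next
  case False
  then have "omega n e \<noteq> 1" "omega n e ^ n = 1"
    using assms by (simp_all add: omega_eq_1_iff omega_pow)
  then show ?thesis
    using False by (simp add: omega_pow[symmetric] geometric_sum)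
qed

definition add_char :: "nat \<Rightarrow> nat set \<Rightarrow> (nat \<Rightarrow> int) \<Rightarrow> (nat \<Rightarrow> nat) \<Rightarrow> complex" where
  "add_char n L s r = omega n (\<Sum>a\<in>L. int (r a) * s a)"

lemma add_char_mult_cnj:
  "add_char n L s r * cnj (add_char n L s' r) = add_char n L (\<lambda>a. s a - s' a) r"
  by (simp add: add_char_def omega_mult_cnj right_diff_distrib sum_subtractf)

lemma sum_add_char:
  assumes "n > 0" "finite L"
  shows "(\<Sum>r\<in>L \<rightarrow>\<^sub>E {..<n}. add_char n L e r)
    = (if \<forall>a\<in>L. int n dvd e a then of_nat n ^ card L else 0)"
proof -
  have "(\<Sum>r\<in>L \<rightarrow>\<^sub>E {..<n}. add_char n L e r)
      = (\<Sum>r\<in>L \<rightarrow>\<^sub>E {..<n}. \<Prod>a\<in>L. omega n (int (r a) * e a))"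
    by (simp add: add_char_def omega_sum)
  also have "\<dots> = (\<Prod>a\<in>L. \<Sum>t<n. omega n (int t * e a))"
    using assms(2) by (simp add: prod_sum_PiE)
  also have "\<dots> = (\<Prod>a\<in>L. if int n dvd e a then of_nat n else 0)"
    using assms(1) by (simp add: sum_omega_multiples)
  also have "\<dots> = (if \<forall>a\<in>L. int n dvd e a then of_nat n ^ card L else 0)"
    using assms(2) by (auto simp: prod_zero)
  finally show ?thesis .
qed

lemma add_char_orthogonal:
  assumes "n > 0" "finite L" "s \<in> L \<rightarrow>\<^sub>E {0..<int n}" "s' \<in> L \<rightarrow>\<^sub>E {0..<int n}"
  shows "(\<Sum>r\<in>L \<rightarrow>\<^sub>E {..<n}. add_char n L s r * cnj (add_char n L s' r))
    = (if s = s' then of_nat n ^ card L else 0)"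
proof -
  have "(\<forall>a\<in>L. int n dvd s a - s' a) \<longleftrightarrow> s = s'"
  proof
    assume dvd: "\<forall>a\<in>L. int n dvd s a - s' a"
    show "s = s'"
    proof (rule PiE_ext[OF assms(3,4)])
      fix a assume "a \<in> L"
      then have "s a mod int n = s' a mod int n"
        using dvd by (simp add: mod_eq_dvd_iff)
      moreover have "s a \<in> {0..<int n}" "s' a \<in> {0..<int n}"
        using \<open>a \<in> L\<close> assms(3,4) by auto
      ultimately show "s a = s' a"
        by simp
    qed
  qed simp
  then show ?thesis
    using assms(1,2) by (simp add: add_char_mult_cnj sum_add_char)
qed

section \<open>Rank of a matrix with orthogonal columns\<close>

interpretation fun_vs: vector_space "\<lambda>(s::complex) (f::'r \<Rightarrow> complex) r. s * f r"
  by unfold_locales (simp_all add: fun_eq_iff algebra_simps)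

lemma sum_fun_apply: "(\<Sum>w\<in>t. f w) r = (\<Sum>w\<in>t. f w r)"
  by (induction t rule: infinite_finite_induct) simp_all

lemma fun_vs_independent_orthogonal:
  fixes v :: "'s \<Rightarrow> 'r \<Rightarrow> complex"
  assumes orth: "\<And>s s'. s \<in> S \<Longrightarrow> s' \<in> S \<Longrightarrow>
      (\<Sum>r\<in>R. v s r * cnj (v s' r)) = (if s = s' then N else 0)"
    and "N \<noteq> 0"
  shows "inj_on v S" "fun_vs.independent (v ` S)"
proof -
  show inj: "inj_on v S"
  proof (rule inj_onI)
    fix s s' assume "s \<in> S" "s' \<in> S" "v s = v s'"
    then have "(\<Sum>r\<in>R. v s r * cnj (v s' r)) = N"
      using orth[of s s] by simp
    then show "s = s'"
      using orth[OF \<open>s \<in> S\<close> \<open>s' \<in> S\<close>] \<open>N \<noteq> 0\<close> by (metis (full_types))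
  qed
  show "fun_vs.independent (v ` S)"
    unfolding fun_vs.independent_explicit_module
  proof (intro allI impI)
    fix t u w0
    assume t: "finite t" "t \<subseteq> v ` S" and comb: "(\<Sum>w\<in>t. (\<lambda>r. u w * w r)) = 0" and "w0 \<in> t"
    obtain s0 where s0: "s0 \<in> S" "w0 = v s0"
      using \<open>w0 \<in> t\<close> t(2) by blast
    have pair: "(\<Sum>r\<in>R. w r * cnj (w0 r)) = (if w = w0 then N else 0)" if "w \<in> t" for w
    proof -
      from \<open>w \<in> t\<close> t(2) obtain s where "s \<in> S" "w = v s"
        by blast
      then show ?thesis
        using orth[OF _ s0(1)] inj s0 by (auto dest: inj_onD)
    qed
    have "(\<Sum>w\<in>t. u w * w r) = 0" for r
      using fun_cong[OF comb, of r] by (simp add: sum_fun_apply)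
    then have "0 = (\<Sum>r\<in>R. (\<Sum>w\<in>t. u w * w r) * cnj (w0 r))"
      by simp
    also have "\<dots> = (\<Sum>w\<in>t. u w * (\<Sum>r\<in>R. w r * cnj (w0 r)))"
      by (simp add: sum_distrib_left sum_distrib_right mult_ac sum.swap[of _ R])
    also have "\<dots> = (\<Sum>w\<in>t. if w = w0 then u w * N else 0)"
      by (rule sum.cong) (simp_all add: pair)
    also have "\<dots> = u w0 * N"
      using t(1) \<open>w0 \<in> t\<close> by simp
    finally show "u w0 = 0"
      using \<open>N \<noteq> 0\<close> by simp
  qed
qed

lemma fun_vs_span_rescaled:
  assumes "\<And>c. c \<in> C \<Longrightarrow> f c = (\<lambda>r. \<phi> c * g c r)" "\<And>c. c \<in> C \<Longrightarrow> \<phi> c \<noteq> 0"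
  shows "fun_vs.span (f ` C) = fun_vs.span (g ` C)"
  unfolding fun_vs.span_eq
proof safe
  fix c assume "c \<in> C"
  then show "f c \<in> fun_vs.span (g ` C)"
    using assms(1) fun_vs.span_scale[OF fun_vs.span_base[of "g c"]] by simp
  have "g c = (\<lambda>r. inverse (\<phi> c) * f c r)"
    using \<open>c \<in> C\<close> assms by (simp add: fun_eq_iff)
  then show "g c \<in> fun_vs.span (f ` C)"
    using \<open>c \<in> C\<close> fun_vs.span_scale[OF fun_vs.span_base[of "f c"]] by simp
qed

lemma mat_rank_eq_card_orthogonal:
  assumes "\<And>r c. r \<in> R \<Longrightarrow> c \<in> C \<Longrightarrow> M r c = \<phi> c * v (h c) r"
    and "\<And>c. c \<in> C \<Longrightarrow> \<phi> c \<noteq> 0"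
    and "\<And>s s'. s \<in> h ` C \<Longrightarrow> s' \<in> h ` C \<Longrightarrow>
      (\<Sum>r\<in>R. v s r * cnj (v s' r)) = (if s = s' then N else 0)"
    and "N \<noteq> 0"
  shows "mat_rank R C M = card (h ` C)"
proof -
  define w where "w s = (\<lambda>r. if r \<in> R then v s r else 0)" for s
  have orth: "(\<Sum>r\<in>R. w s r * cnj (w s' r)) = (if s = s' then N else 0)"
    if "s \<in> h ` C" "s' \<in> h ` C" for s s'
    using assms(3)[OF that] by (simp add: w_def)
  note indep = fun_vs_independent_orthogonal[where S = "h ` C" and v = w, OF orth assms(4)]
  have "mat_rank R C M = fun_vs.dim ((\<lambda>c. w (h c)) ` C)"
    unfolding mat_rank_def
    by (rule fun_vs.span_eq_dim, rule fun_vs_span_rescaled[where \<phi> = \<phi>])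
      (use assms(1,2) in \<open>auto simp: w_def fun_eq_iff\<close>)
  also have "\<dots> = card (w ` h ` C)"
    using indep(2) by (simp add: image_comp fun_vs.dim_eq_card_independent)
  also have "\<dots> = card (h ` C)"
    using indep(1) by (rule card_image)
  finally show ?thesis .
qed

section \<open>The reshaped matrix\<close>

definition bilin_form :: "(nat \<Rightarrow> nat \<Rightarrow> int) \<Rightarrow> nat set \<Rightarrow> nat set \<Rightarrow>
    (nat \<Rightarrow> nat) \<Rightarrow> (nat \<Rightarrow> nat) \<Rightarrow> int" where
  "bilin_form T A B i j = (\<Sum>a\<in>A. \<Sum>b\<in>B. int (i a) * T a b * int (j b))"

lemma W_T_eq_omega:
  assumes "n > 0"
  shows "W_T n d T i j = omega n (bilin_form T {0..<d} {0..<d} i j)"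
proof -
  let ?E = "bilin_form T {0..<d} {0..<d} i j"
  have "cis (2 * pi / real n) = omega n 1"
    by (simp add: omega_def)
  moreover have "W_T n d T i j = cis (2 * pi / real n) ^ nat (?E mod int n)"
    by (simp add: W_T_def bilin_form_def atLeast0LessThan)
  ultimately have "W_T n d T i j = omega n (?E mod int n)"
    using assms by (simp add: omega_pow)
  also have "\<dots> = omega n ?E"
    using assms cong_mod_leftI[OF cong_refl] by (rule omega_cong)
  finally show ?thesis .
qed

lemma bilin_form_transpose: "bilin_form T A B i j = bilin_form (\<lambda>b a. T a b) B A j i"
  unfolding bilin_form_def by (subst sum.swap) (simp add: mult_ac)

lemma bilin_form_glue:
  assumes "finite D" "L \<subseteq> D"
  shows "bilin_form T D D (glue L r1 c1) (glue L r2 c2) =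
    bilin_form T L L r1 r2 + bilin_form T L (D - L) r1 c2 +
    bilin_form T (D - L) L c1 r2 + bilin_form T (D - L) (D - L) c1 c2"
proof -
  have split: "sum h D = sum h L + sum h (D - L)" for h :: "nat \<Rightarrow> int"
    using assms by (metis add.commute sum.subset_diff)
  let ?g = "\<lambda>A B. \<Sum>a\<in>A. \<Sum>b\<in>B. int (glue L r1 c1 a) * T a b * int (glue L r2 c2 b)"
  have "?g L L = bilin_form T L L r1 r2" "?g L (D - L) = bilin_form T L (D - L) r1 c2"
    "?g (D - L) L = bilin_form T (D - L) L c1 r2"
    "?g (D - L) (D - L) = bilin_form T (D - L) (D - L) c1 c2"
    unfolding bilin_form_def by (intro sum.cong refl; simp add: glue_def)+
  then show ?thesis
    unfolding bilin_form_def[of T D D] split sum.distrib by (simp add: ac_simps)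
qed

lemma bilin_form_cong_mat_vec_mod:
  "[bilin_form T A B i j = (\<Sum>a\<in>A. int (i a) * mat_vec_mod n T A B j a)] (mod int n)"
proof -
  have "bilin_form T A B i j = (\<Sum>a\<in>A. int (i a) * (\<Sum>b\<in>B. T a b * int (j b)))"
    by (simp add: bilin_form_def sum_distrib_left mult.assoc)
  also have "[\<dots> = (\<Sum>a\<in>A. int (i a) * ((\<Sum>b\<in>B. T a b * int (j b)) mod int n))] (mod int n)"
    by (intro cong_sum cong_mult cong_refl) simp
  also have "(\<Sum>a\<in>A. int (i a) * ((\<Sum>b\<in>B. T a b * int (j b)) mod int n))
      = (\<Sum>a\<in>A. int (i a) * mat_vec_mod n T A B j a)"
    by (simp add: mat_vec_mod_def)
  finally show ?thesis .
qed

lemma W_resh_factor: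
  assumes "n > 0" "L \<subseteq> {0..<d}"
  defines "Lc \<equiv> {0..<d} - L"
  shows "W_resh n d T L r c =
    omega n (bilin_form T Lc Lc (fst c) (snd c)) *
    (omega n (bilin_form T L L (fst r) (snd r)) *
     add_char n L (mat_vec_mod n T L Lc (snd c)) (fst r) *
     add_char n L (mat_vec_mod n (\<lambda>b a. T a b) L Lc (fst c)) (snd r))"
proof -
  have "[bilin_form T L Lc (fst r) (snd c) + bilin_form T Lc L (fst c) (snd r)
      = (\<Sum>a\<in>L. int (fst r a) * mat_vec_mod n T L Lc (snd c) a)
        + (\<Sum>a\<in>L. int (snd r a) * mat_vec_mod n (\<lambda>b a. T a b) L Lc (fst c) a)] (mod int n)"
    unfolding bilin_form_transpose[of T Lc L] by (intro cong_add bilin_form_cong_mat_vec_mod)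
  from omega_cong[OF assms(1) this]
  have "omega n (bilin_form T L Lc (fst r) (snd c) + bilin_form T Lc L (fst c) (snd r))
      = add_char n L (mat_vec_mod n T L Lc (snd c)) (fst r) *
        add_char n L (mat_vec_mod n (\<lambda>b a. T a b) L Lc (fst c)) (snd r)"
    by (simp add: add_char_def omega_add)
  then show ?thesis
    using assms(1,2) unfolding Lc_def W_resh_def W_T_eq_omega[OF assms(1)]
    by (simp add: bilin_form_glue omega_add mult_ac)
qed

lemma add_char_pair_orthogonal:
  fixes n :: nat and L :: "nat set" and Q :: "(nat \<Rightarrow> nat) \<times> (nat \<Rightarrow> nat) \<Rightarrow> int"
  defines "P \<equiv> L \<rightarrow>\<^sub>E {0..<int n}"
    and "v \<equiv> \<lambda>s r. omega n (Q r) * add_char n L (fst s) (snd r) * add_char n L (snd s) (fst r)"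
  assumes "n > 0" "finite L" "s \<in> P \<times> P" "s' \<in> P \<times> P"
  shows "(\<Sum>r\<in>tuple_pairs n L. v s r * cnj (v s' r))
    = (if s = s' then of_nat n ^ (2 * card L) else 0)"
proof -
  have "v s r * cnj (v s' r) =
      add_char n L (snd s) (fst r) * cnj (add_char n L (snd s') (fst r)) *
      (add_char n L (fst s) (snd r) * cnj (add_char n L (fst s') (snd r)))" for r
  proof -
    have "omega n (Q r) * cnj (omega n (Q r)) = 1"
      by (simp add: omega_mult_cnj)
    then show ?thesis
      unfolding v_def by (simp add: mult_ac)
  qed
  then have "(\<Sum>r\<in>tuple_pairs n L. v s r * cnj (v s' r)) =
      (\<Sum>r1\<in>L \<rightarrow>\<^sub>E {..<n}. add_char n L (snd s) r1 * cnj (add_char n L (snd s') r1)) *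
      (\<Sum>r2\<in>L \<rightarrow>\<^sub>E {..<n}. add_char n L (fst s) r2 * cnj (add_char n L (fst s') r2))"
    by (simp add: tuple_pairs_def sum_product sum.cartesian_product case_prod_beta)
  then show ?thesis
    using assms(3-6) unfolding P_def
    by (simp add: add_char_orthogonal mem_Times_iff prod_eq_iff power_add mult_2)
qed

lemma mat_rank_W_resh:
  assumes "n > 0" "L \<subseteq> {0..<d}"
  defines "Lc \<equiv> {0..<d} - L"
  shows "mat_rank (tuple_pairs n L) (tuple_pairs n Lc) (W_resh n d T L) =
    card (mat_vec_mod n T L Lc ` (Lc \<rightarrow>\<^sub>E {..<n})) *
    card (mat_vec_mod n (\<lambda>b a. T a b) L Lc ` (Lc \<rightarrow>\<^sub>E {..<n}))"
proof -
  define F1 where "F1 = mat_vec_mod n T L Lc"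
  define F2 where "F2 = mat_vec_mod n (\<lambda>b a. T a b) L Lc"
  define v where "v s r = omega n (bilin_form T L L (fst r) (snd r)) *
    add_char n L (fst s) (snd r) * add_char n L (snd s) (fst r)" for s r
  have image_eq:
    "map_prod F2 F1 ` tuple_pairs n Lc = F2 ` (Lc \<rightarrow>\<^sub>E {..<n}) \<times> F1 ` (Lc \<rightarrow>\<^sub>E {..<n})"
    unfolding tuple_pairs_def by (rule map_prod_surj_on) simp_all
  have "map_prod F2 F1 ` tuple_pairs n Lc \<subseteq> (L \<rightarrow>\<^sub>E {0..<int n}) \<times> (L \<rightarrow>\<^sub>E {0..<int n})"
    unfolding image_eq unfolding F1_def F2_def
    by (intro Sigma_mono image_subsetI mat_vec_mod_in_PiE[OF assms(1)])
  moreover have "finite L"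
    using assms(2) finite_subset by blast
  ultimately have orth: "(\<Sum>r\<in>tuple_pairs n L. v s r * cnj (v s' r))
      = (if s = s' then of_nat n ^ (2 * card L) else 0)"
    if "s \<in> map_prod F2 F1 ` tuple_pairs n Lc" "s' \<in> map_prod F2 F1 ` tuple_pairs n Lc" for s s'
    using that assms(1) unfolding v_def by (intro add_char_pair_orthogonal) auto
  have "mat_rank (tuple_pairs n L) (tuple_pairs n Lc) (W_resh n d T L)
      = card (map_prod F2 F1 ` tuple_pairs n Lc)"
  proof (rule mat_rank_eq_card_orthogonal)
    show "W_resh n d T L r c = omega n (bilin_form T Lc Lc (fst c) (snd c)) * v (map_prod F2 F1 c) r"
      for r c
      using assms(1,2) unfolding Lc_def v_def F1_def F2_def by (simp add: W_resh_factor mult_ac)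
    show "of_nat n ^ (2 * card L) \<noteq> (0::complex)"
      using assms(1) by simp
  qed (use orth in simp_all)
  also have "\<dots> = card (F1 ` (Lc \<rightarrow>\<^sub>E {..<n})) * card (F2 ` (Lc \<rightarrow>\<^sub>E {..<n}))"
    unfolding image_eq card_cartesian_product by simp
  finally show ?thesis
    unfolding F1_def F2_def .
qed

theorem proposition6p10:
  fixes d n :: nat and T :: "nat \<Rightarrow> nat \<Rightarrow> int" and L :: "nat set"
  assumes "even d" and "prime n" and "n > 2 * d"
    and "cauchy_matrix n d T"
    and "L \<subseteq> {0..<d}"
  shows "mat_rank (tuple_pairs n L) (tuple_pairs n ({0..<d} - L)) (W_resh n d T L)
           = n ^ (2 * min (card L) (d - card L))"
proof -
  let ?Lc = "{0..<d} - L"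
  obtain x y where xy: "cauchy_mod (int n) T x y {0..<d} {0..<d}"
    using assms(4) by (rule cauchy_matrix_imp_cauchy_mod)
  have "cauchy_mod (int n) T x y L ?Lc"
    using xy assms(5) by (rule cauchy_mod_subset) auto
  moreover have "cauchy_mod (int n) (\<lambda>b a. T a b) (\<lambda>b. - y b) (\<lambda>a. - x a) L ?Lc"
    using cauchy_mod_transpose[OF xy] assms(5) by (rule cauchy_mod_subset) auto
  moreover have "finite L"
    using assms(5) finite_subset by blast
  moreover have "card ?Lc = d - card L"
    using assms(5) \<open>finite L\<close> by (simp add: card_Diff_subset)
  moreover have "n > 0"
    using assms(2) prime_gt_0_nat by blast
  ultimately show ?thesis
    using assms(2,5) by (simp add: mat_rank_W_resh card_image_mat_vec_mod power_add mult_2)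
qed

end
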